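(* Let $\mu$ be a vertex of $\Gamma$. Sending a vertex $\eta\neq\mu$ to the branch emanating from $\mu$ that contains $\eta$ gives a bijection from the set of free vertices $\eta$ with $\eta\succ\mu$ onto the set of nonempty branches emanating from $\mu$ that are posterior to $\mu$, and a bijection from the set of vertices $\eta$ with $\mu\succ\eta$ onto the set of branches emanating from $\mu$ that are anterior to $\mu$. In particular there are at most two branches anterior to $\mu$.
   Context: Setting: $R$ two-dimensional regular local ring with algebraically closed residue field; $\pi:X=X_{N+1}\to\cdots\to X_1=\operatorname{Spec}R$ a composition of blowups $\pi_\mu$ at closed points $x_\mu\in X_\mu$; $E_\mu$ the strict transform on $X$ of $\pi_\mu^{-1}(x_\mu)$. $\mu\succ\nu$ ($\mu$ proximate to $\nu$) if $x_\mu$ lies on the strict transform on $X_\mu$ of $\pi_\nu^{-1}(x_\nu)$; $\mu$ is infinitely near to $\nu$ if $X_\mu\to X_\nu$ maps $x_\mu$ to $x_\nu$. A vertex is free if it is proximate to at most one vertex (a vertex is proximate to at most two). Dual graph $\Gamma$: vertices $1..N$, $\gamma\sim\eta$ iff $\gamma\neq\eta$ and $E_\gamma\cap E_\eta\ne\emptyset$ (a tree). The branches emanating from $\mu$ are the subgraphs $\Gamma^\mu_\nu$ ($\nu\sim\mu$), where $\Gamma^\mu_\nu$ is the maximal connected subgraph of $\Gamma$ containing $\nu$ but not $\mu$. A branch is anterior to $\mu$ if $\mu$ is infinitely near to some of its vertices, and posterior to $\mu$ otherwise. *)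

theory Defs
  imports Main
begin

(* Combinatorial model of a sequence of point blowups X_{N+1} -> ... -> X_1 = Spec R.
   Vertex mu (1 <= mu <= N) corresponds to the blowup of the closed point x_mu of X_mu.
   S mu = set of indices nu < mu such that x_mu lies on the strict transform on X_mu
   of the exceptional curve pi_nu^{-1}(x_nu). *)

definition valid_seq :: "nat \<Rightarrow> (nat \<Rightarrow> nat set) \<Rightarrow> bool" where
  "valid_seq N S \<longleftrightarrow>
     (\<forall>mu\<in>{1..N}. S mu \<subseteq> {1..<mu} \<and> card (S mu) \<le> 2 \<and> (2 \<le> mu \<longrightarrow> S mu \<noteq> {}))"

(* intersection graph of the strict transforms E_1..E_{k-1} on X_k *)
primrec adj :: "(nat \<Rightarrow> nat set) \<Rightarrow> nat \<Rightarrow> nat \<Rightarrow> nat \<Rightarrow> bool" where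
  "adj S 0 a b = False"
| "adj S (Suc k) a b =
     ((a < k \<and> b < k \<and> adj S k a b \<and> \<not> (a \<in> S k \<and> b \<in> S k))
      \<or> (a < k \<and> b = k \<and> a \<in> S k)
      \<or> (a = k \<and> b < k \<and> b \<in> S k))"

(* x_mu lies on at most two exceptional curves, and if on two they meet (at x_mu) *)
definition blowup_seq :: "nat \<Rightarrow> (nat \<Rightarrow> nat set) \<Rightarrow> bool" where
  "blowup_seq N S \<longleftrightarrow> valid_seq N S \<and>
     (\<forall>mu\<in>{1..N}. \<forall>a b. S mu = {a, b} \<and> a \<noteq> b \<longrightarrow> adj S mu a b)"

definition vertices :: "nat \<Rightarrow> nat set" where
  "vertices N = {1..N}"

(* dual graph Gamma on X = X_{N+1} *)
definition dual_adj :: "nat \<Rightarrow> (nat \<Rightarrow> nat set) \<Rightarrow> nat \<Rightarrow> nat \<Rightarrow> bool" where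
  "dual_adj N S g e \<longleftrightarrow> g \<in> vertices N \<and> e \<in> vertices N \<and> g \<noteq> e \<and> adj S (Suc N) g e"

definition proximate :: "(nat \<Rightarrow> nat set) \<Rightarrow> nat \<Rightarrow> nat \<Rightarrow> bool" where
  "proximate S mu nu \<longleftrightarrow> nu \<in> S mu"

(* mu infinitely near to nu: X_mu -> X_nu maps x_mu to x_nu *)
inductive inf_near :: "(nat \<Rightarrow> nat set) \<Rightarrow> nat \<Rightarrow> nat \<Rightarrow> bool" for S where
  refl: "inf_near S nu nu"
| step: "rho \<in> S mu \<Longrightarrow> inf_near S rho nu \<Longrightarrow> inf_near S mu nu"

definition free_vertex :: "nat \<Rightarrow> (nat \<Rightarrow> nat set) \<Rightarrow> nat \<Rightarrow> bool" where
  "free_vertex N S eta \<longleftrightarrow> card {nu \<in> vertices N. proximate S eta nu} \<le> 1"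

definition branch :: "nat \<Rightarrow> (nat \<Rightarrow> nat set) \<Rightarrow> nat \<Rightarrow> nat \<Rightarrow> nat set" where
  "branch N S mu nu =
     {x. (\<lambda>a b. dual_adj N S a b \<and> a \<noteq> mu \<and> b \<noteq> mu)\<^sup>*\<^sup>* nu x}"

definition branches :: "nat \<Rightarrow> (nat \<Rightarrow> nat set) \<Rightarrow> nat \<Rightarrow> nat set set" where
  "branches N S mu = {branch N S mu nu | nu. dual_adj N S nu mu}"

definition anterior :: "(nat \<Rightarrow> nat set) \<Rightarrow> nat \<Rightarrow> nat set \<Rightarrow> bool" where
  "anterior S mu B \<longleftrightarrow> (\<exists>rho\<in>B. inf_near S mu rho)"

definition posterior :: "(nat \<Rightarrow> nat set) \<Rightarrow> nat \<Rightarrow> nat set \<Rightarrow> bool" where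
  "posterior S mu B \<longleftrightarrow> \<not> anterior S mu B"

definition branch_containing :: "nat \<Rightarrow> (nat \<Rightarrow> nat set) \<Rightarrow> nat \<Rightarrow> nat \<Rightarrow> nat set" where
  "branch_containing N S mu eta = (THE B. B \<in> branches N S mu \<and> eta \<in> B)"

end

theory Submission
  imports Defs
begin

text \<open>Blowing up \<open>x\<^sub>k\<close> adds the vertex \<open>k\<close>, joined to the at most two vertices it is proximate to,
and deletes the edge between those two (they meet at \<open>x\<^sub>k\<close>). So every stage of the dual graph
is a tree, and whether two old vertices are connected avoiding a fixed vertex \<open>c\<close> never changes
later: a detour through \<open>k\<close> stands in for the deleted edge.

The branches at \<open>\<mu>\<close> are the components of \<open>\<Gamma> - \<mu>\<close>. One of them is anterior iff it contains
a vertex \<open>< \<mu>\<close>, and by connectedness of the stage on which \<open>\<mu>\<close> appears such a component contains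
a vertex that \<open>\<mu>\<close> is proximate to; two of those lie in different components because the edges
to \<open>\<mu>\<close> are bridges. A free \<open>\<eta> \<succ> \<mu>\<close> is proximate to \<open>\<mu>\<close> only, so when it appears its only
neighbour is \<open>\<mu>\<close>: it is the least vertex of its branch. Conversely the least vertex of a
posterior branch can only be proximate to \<open>\<mu>\<close>.\<close>

lemma rtranclp_reaches_neighbour_avoiding:
  assumes "R\<^sup>*\<^sup>* x c" "x \<noteq> c"
  shows "\<exists>z. (\<lambda>a b. R a b \<and> a \<noteq> c \<and> b \<noteq> c)\<^sup>*\<^sup>* x z \<and> R z c"
  using assms
proof (induction rule: converse_rtranclp_induct)
  case (step x y)
  show ?case
  proof (cases "y = c")
    case False
    with step obtain z where "(\<lambda>a b. R a b \<and> a \<noteq> c \<and> b \<noteq> c)\<^sup>*\<^sup>* y z" "R z c" by blast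
    with step False show ?thesis by (blast intro: converse_rtranclp_into_rtranclp)
  qed (use step in blast)
qed simp

lemma rtranclp_by_steps:
  assumes "\<And>a b. R a b \<Longrightarrow> R'\<^sup>*\<^sup>* a b" and "R\<^sup>*\<^sup>* x y"
  shows "R'\<^sup>*\<^sup>* x y"
  using assms(2) by induction (auto dest: assms(1) intro: rtranclp_trans)

lemma adj_sym: "adj S k a b \<Longrightarrow> adj S k b a"
  by (induction k) auto

lemma adj_irrefl: "\<not> adj S k a a"
  by (induction k) auto

lemma adj_less: "adj S k a b \<Longrightarrow> a < k \<and> b < k"
  by (induction k) auto

lemma valid_seq_proximates:
  "valid_seq N S \<Longrightarrow> k \<in> {1..N} \<Longrightarrow> finite (S k) \<and> card (S k) \<le> 2 \<and> S k \<subseteq> {1..<k}"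
  unfolding valid_seq_def by (meson finite_atLeastLessThan finite_subset)

lemma adj_ge_1:
  assumes "valid_seq N S" "k \<le> Suc N" "adj S k a b"
  shows "1 \<le> a \<and> 1 \<le> b"
  using assms(2,3)
proof (induction k arbitrary: a b)
  case (Suc k)
  have "x \<in> S k \<Longrightarrow> x < k \<Longrightarrow> 1 \<le> x" for x
    using valid_seq_proximates[OF assms(1), of k] Suc.prems(1) by force
  with Suc show ?case by auto
qed simp

lemma blowup_seq_proximates_doubleton:
  assumes "blowup_seq N S" "k \<in> {1..N}" "s \<in> S k" "t \<in> S k" "s \<noteq> t"
  shows "S k = {s, t} \<and> adj S k s t"
proof -
  have "finite (S k)" "card (S k) \<le> 2"
    using assms(1,2) valid_seq_proximates unfolding blowup_seq_def by blast+
  then have "S k = {s, t}"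
    using assms(3-5) by (metis card_seteq card_2_iff empty_subsetI insert_subset)
  with assms show ?thesis unfolding blowup_seq_def by blast
qed

lemma adj_Suc_cases:
  "adj S m u v \<Longrightarrow> adj S (Suc m) u v \<or> (adj S (Suc m) u m \<and> adj S (Suc m) m v)"
  using adj_less[of S m u v] by auto

declare adj.simps(2) [simp del]

lemma reach_adj_Suc:
  assumes "(adj S m)\<^sup>*\<^sup>* x y"
  shows "(adj S (Suc m))\<^sup>*\<^sup>* x y"
proof (rule rtranclp_by_steps[OF _ assms])
  fix u v assume "adj S m u v"
  then show "(adj S (Suc m))\<^sup>*\<^sup>* u v"
    using adj_Suc_cases[of S m u v]
    by (auto intro: converse_rtranclp_into_rtranclp)
qed

abbreviation adj_avoiding :: "(nat \<Rightarrow> nat set) \<Rightarrow> nat \<Rightarrow> nat \<Rightarrow> nat \<Rightarrow> nat \<Rightarrow> bool" where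
  "adj_avoiding S k c \<equiv> \<lambda>a b. adj S k a b \<and> a \<noteq> c \<and> b \<noteq> c"

lemma reach_avoiding_Suc:
  assumes "(adj_avoiding S m c)\<^sup>*\<^sup>* x y" "m \<noteq> c"
  shows "(adj_avoiding S (Suc m) c)\<^sup>*\<^sup>* x y"
proof (rule rtranclp_by_steps[OF _ assms(1)])
  fix u v assume "adj_avoiding S m c u v"
  then show "(adj_avoiding S (Suc m) c)\<^sup>*\<^sup>* u v"
    using adj_Suc_cases[of S m u v] assms(2)
    by (auto intro: converse_rtranclp_into_rtranclp)
qed

lemma reach_avoiding_lift:
  assumes "c < k" "k \<le> m" "(adj_avoiding S k c)\<^sup>*\<^sup>* x y"
  shows "(adj_avoiding S m c)\<^sup>*\<^sup>* x y"
  using assms(2)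
proof (induction m rule: dec_induct)
  case (step n)
  with assms(1) show ?case using reach_avoiding_Suc[of S n c x y] by simp
qed (fact assms(3))

lemma adj_connected_to_1:
  assumes "valid_seq N S" "m \<le> Suc N" "x \<in> {1..<m}"
  shows "(adj S m)\<^sup>*\<^sup>* 1 x"
  using assms(2,3)
proof (induction m arbitrary: x)
  case (Suc k)
  show ?case
  proof (cases "x < k")
    case True
    with Suc show ?thesis by (simp add: reach_adj_Suc)
  next
    case False
    then have x: "x = k" using Suc.prems by simp
    show ?thesis
    proof (cases "k = 1")
      case False
      then have "S k \<noteq> {}" "S k \<subseteq> {1..<k}"
        using assms(1) Suc.prems x unfolding valid_seq_def by auto
      then obtain s where s: "s \<in> S k" "s \<in> {1..<k}" by blast
      with Suc have "(adj S (Suc k))\<^sup>*\<^sup>* 1 s" by (simp add: reach_adj_Suc)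
      moreover have "adj S (Suc k) s k" using s by (simp add: adj.simps)
      ultimately show ?thesis using x by (simp add: rtranclp.rtrancl_into_rtrancl)
    qed (simp add: x)
  qed
qed simp

lemma adj_connected:
  assumes "valid_seq N S" "m \<le> Suc N" "x \<in> {1..<m}" "y \<in> {1..<m}"
  shows "(adj S m)\<^sup>*\<^sup>* x y"
proof -
  have "symp (adj S m)" by (rule sympI) (fact adj_sym)
  then have "(adj S m)\<^sup>*\<^sup>* x 1"
    using adj_connected_to_1[OF assms(1-3)] by (blast dest: sympD[OF symp_rtranclp])
  then show ?thesis using adj_connected_to_1[OF assms(1,2,4)] by (rule rtranclp_trans)
qed

text \<open>A \<open>Q\<close>-path of stage \<open>k + 1\<close> starting at an old vertex projects to a \<open>P\<close>-path of stage \<open>k\<close>: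
a detour \<open>s - k - t\<close> through the new vertex is replaced by the edge \<open>s - t\<close> it was cut from.\<close>
lemma reach_Suc_project:
  assumes bs: "blowup_seq N S" and "k \<le> N" "x < k"
    and path: "(\<lambda>u v. adj S (Suc k) u v \<and> Q u v)\<^sup>*\<^sup>* x y"
    and old: "\<And>u v. u < k \<Longrightarrow> v < k \<Longrightarrow> adj S (Suc k) u v \<Longrightarrow> Q u v \<Longrightarrow> P u v"
    and detour: "\<And>s t. s \<in> S k \<Longrightarrow> t \<in> S k \<Longrightarrow> s \<noteq> t \<Longrightarrow> Q s k \<Longrightarrow> Q k t \<Longrightarrow> P s t"
  shows "(y < k \<longrightarrow> (\<lambda>u v. adj S k u v \<and> P u v)\<^sup>*\<^sup>* x y) \<and>
         (y = k \<longrightarrow> (\<exists>s\<in>S k. Q s k \<and> (\<lambda>u v. adj S k u v \<and> P u v)\<^sup>*\<^sup>* x s))"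
  using path
proof (induction rule: rtranclp_induct)
  case (step z w)
  from step.hyps(2) have a: "adj S (Suc k) z w" and q: "Q z w" by auto
  have "k \<in> {1..N}" using assms(2,3) by simp
  from adj_less[OF a] consider "z < k" "w < k" | "z < k" "w = k" | "z = k" "w < k"
    using adj_irrefl[of S "Suc k" k] a by (metis less_SucE)
  then show ?case
  proof cases
    case 1
    with a have "adj S k z w" by (simp add: adj.simps)
    with old[OF 1 a q] step.IH 1 show ?thesis by (auto intro: rtranclp.rtrancl_into_rtrancl)
  next
    case 2
    with a have "z \<in> S k" by (simp add: adj.simps)
    with step.IH 2 q show ?thesis by auto
  next
    case 3
    with a have w: "w \<in> S k" by (simp add: adj.simps)
    from step.IH 3 obtain s where s: "s \<in> S k" "Q s k" "(\<lambda>u v. adj S k u v \<and> P u v)\<^sup>*\<^sup>* x s"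
      by auto
    show ?thesis
    proof (cases "s = w")
      case False
      have "adj S k s w"
        using blowup_seq_proximates_doubleton[OF bs \<open>k \<in> {1..N}\<close> s(1) w False] by blast
      moreover have "P s w" using detour[OF s(1) w False s(2)] q 3 by simp
      ultimately show ?thesis using s(3) 3 by (auto intro: rtranclp.rtrancl_into_rtrancl)
    qed (use s 3 in auto)
  qed
qed (use assms(3) in auto)

lemma reach_avoiding_project:
  assumes bs: "blowup_seq N S" and "k \<le> m" "m \<le> Suc N" "a < k" "b < k"
    and "(adj_avoiding S m c)\<^sup>*\<^sup>* a b"
  shows "(adj_avoiding S k c)\<^sup>*\<^sup>* a b"
  using assms(2,3,6)
proof (induction m rule: dec_induct)
  case (step n)
  have "(\<lambda>u v. adj S n u v \<and> u \<noteq> c \<and> v \<noteq> c)\<^sup>*\<^sup>* a b"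
    using reach_Suc_project[OF bs, of n a "\<lambda>u v. u \<noteq> c \<and> v \<noteq> c" b] step assms(4,5) by auto
  with step show ?case by simp
qed

abbreviation adj_minus_edge :: "(nat \<Rightarrow> nat set) \<Rightarrow> nat \<Rightarrow> nat \<Rightarrow> nat \<Rightarrow> nat \<Rightarrow> nat \<Rightarrow> bool" where
  "adj_minus_edge S k a b \<equiv> \<lambda>u v. adj S k u v \<and> \<not> (u \<in> {a, b} \<and> v \<in> {a, b})"

lemma new_edge_bridge:
  assumes bs: "blowup_seq N S" and "k \<le> N" "a \<in> S k" "a < k"
    and old_bridges: "\<And>a b. adj S k a b \<Longrightarrow> \<not> (adj_minus_edge S k a b)\<^sup>*\<^sup>* a b"
  shows "\<not> (adj_minus_edge S (Suc k) a k)\<^sup>*\<^sup>* a k"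
proof
  assume path: "(adj_minus_edge S (Suc k) a k)\<^sup>*\<^sup>* a k"
  have k: "k \<in> {1..N}" using assms(2,4) by simp
  have "k = k \<longrightarrow> (\<exists>s\<in>S k. \<not> (s \<in> {a, k} \<and> k \<in> {a, k}) \<and>
      (\<lambda>u v. adj S k u v \<and> \<not> (u \<in> S k \<and> v \<in> S k))\<^sup>*\<^sup>* a s)"
  proof (rule conjunct2[OF reach_Suc_project[OF bs assms(2,4) path]])
    fix s t assume "s \<in> S k" "t \<in> S k" "s \<noteq> t" "\<not> (s \<in> {a, k} \<and> k \<in> {a, k})"
      "\<not> (k \<in> {a, k} \<and> t \<in> {a, k})"
    then show "\<not> (s \<in> S k \<and> t \<in> S k)"
      using blowup_seq_proximates_doubleton[OF bs k] assms(3) by blast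
  qed (auto simp: adj.simps)
  then obtain s where s: "s \<in> S k" "s \<noteq> a"
    and path': "(\<lambda>u v. adj S k u v \<and> \<not> (u \<in> S k \<and> v \<in> S k))\<^sup>*\<^sup>* a s" by auto
  from blowup_seq_proximates_doubleton[OF bs k assms(3) s(1) s(2)[symmetric]]
  have "S k = {a, s}" "adj S k a s" by auto
  with old_bridges path' show False by simp
qed

lemma adj_edge_bridge:
  assumes bs: "blowup_seq N S" and "k \<le> Suc N" "adj S k a b"
  shows "\<not> (adj_minus_edge S k a b)\<^sup>*\<^sup>* a b"
  using assms(2,3)
proof (induction k arbitrary: a b)
  case (Suc k)
  have k: "k \<le> N" using Suc.prems by simp
  have old_bridges: "\<And>a b. adj S k a b \<Longrightarrow> \<not> (adj_minus_edge S k a b)\<^sup>*\<^sup>* a b"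
    using Suc.IH k by simp
  consider (old) "a < k" "b < k" "adj S k a b" "\<not> (a \<in> S k \<and> b \<in> S k)"
    | (new) "a < k" "b = k" "a \<in> S k" | (new') "a = k" "b < k" "b \<in> S k"
    using Suc.prems(2) by (auto simp: adj.simps)
  then show ?case
  proof cases
    case old
    show ?thesis
    proof
      assume path: "(adj_minus_edge S (Suc k) a b)\<^sup>*\<^sup>* a b"
      have "b < k \<longrightarrow> (adj_minus_edge S k a b)\<^sup>*\<^sup>* a b"
      proof (rule conjunct1[OF reach_Suc_project[OF bs k old(1) path]])
        fix s t assume "s \<in> S k" "t \<in> S k" "s \<noteq> t"
        with old(4) show "\<not> (s \<in> {a, b} \<and> t \<in> {a, b})" by auto
      qed
      with old(2) have "(adj_minus_edge S k a b)\<^sup>*\<^sup>* a b" by simp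
      with old_bridges old(3) show False by blast
    qed
  next
    case new
    then show ?thesis using new_edge_bridge[OF bs k new(3,1) old_bridges] by simp
  next
    case new'
    have "symp (adj_minus_edge S (Suc k) a b)" by (auto intro: sympI adj_sym)
    then have "(adj_minus_edge S (Suc k) a b)\<^sup>*\<^sup>* a b \<Longrightarrow> (adj_minus_edge S (Suc k) b k)\<^sup>*\<^sup>* b k"
      using new' by (auto dest: sympD[OF symp_rtranclp] simp: insert_commute)
    with new_edge_bridge[OF bs k new'(3,2) old_bridges] show ?thesis by blast
  qed
qed simp

lemma inf_near_le:
  assumes "inf_near S x r" "valid_seq N S" "x \<in> vertices N"
  shows "r \<le> x"
  using assms
proof (induction rule: inf_near.induct)
  case (step rho mu nu)
  then have "S mu \<subseteq> {1..<mu}" "mu \<le> N" unfolding valid_seq_def vertices_def by auto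
  with step show ?case unfolding vertices_def by force
qed simp

context
  fixes N :: nat and S :: "nat \<Rightarrow> nat set" and mu :: nat
  assumes blowup: "blowup_seq N S" and mu_vertex: "mu \<in> vertices N"
begin

abbreviation reach :: "nat \<Rightarrow> nat \<Rightarrow> bool" where
  "reach \<equiv> (adj_avoiding S (Suc N) mu)\<^sup>*\<^sup>*"

lemma blowup_valid: "valid_seq N S"
  using blowup unfolding blowup_seq_def by simp

lemma branch_eq_component: "branch N S mu nu = {x. reach nu x}"
proof -
  have "dual_adj N S a b \<longleftrightarrow> adj S (Suc N) a b" for a b
    using adj_less[of S "Suc N" a b] adj_ge_1[OF blowup_valid, of "Suc N" a b] adj_irrefl[of S "Suc N" a]
    unfolding dual_adj_def vertices_def by auto
  then show ?thesis unfolding branch_def by simp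
qed

lemma reach_sym:
  assumes "reach a b"
  shows "reach b a"
proof -
  have "symp (adj_avoiding S (Suc N) mu)" by (rule sympI) (simp add: adj_sym)
  then show ?thesis using assms by (rule sympD[OF symp_rtranclp])
qed

lemma component_eq:
  assumes "reach a b"
  shows "{x. reach a x} = {x. reach b x}"
  using rtranclp_trans[OF assms] rtranclp_trans[OF reach_sym[OF assms]] by blast

lemma reach_ne_mu: "reach a b \<Longrightarrow> a \<noteq> mu \<Longrightarrow> b \<noteq> mu"
  by (induction rule: rtranclp_induct) auto

lemma reach_in_vertices: "reach a b \<Longrightarrow> a \<in> vertices N \<Longrightarrow> b \<in> vertices N"
proof (induction rule: rtranclp_induct)
  case (step y z)
  then show ?case
    using adj_less[of S "Suc N" y z] adj_ge_1[OF blowup_valid, of "Suc N" y z]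
    by (simp add: vertices_def)
qed

lemma neighbour_of_mu_reaches:
  assumes "eta \<in> vertices N" "eta \<noteq> mu"
  shows "\<exists>nu. dual_adj N S nu mu \<and> reach nu eta"
proof -
  have "(adj S (Suc N))\<^sup>*\<^sup>* eta mu"
    using adj_connected[OF blowup_valid] assms(1) mu_vertex unfolding vertices_def by simp
  then obtain z where "reach eta z" "adj S (Suc N) z mu"
    using rtranclp_reaches_neighbour_avoiding[of "adj S (Suc N)" eta mu] assms(2) by blast
  moreover from this have "dual_adj N S z mu"
    using adj_less adj_ge_1[OF blowup_valid] adj_irrefl mu_vertex
    unfolding dual_adj_def vertices_def by fastforce
  ultimately show ?thesis using reach_sym by blast
qed

lemma branches_eq_components: "branches N S mu = {{x. reach nu x} | nu. dual_adj N S nu mu}"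
  unfolding branches_def branch_eq_component by simp

lemma branchesE:
  assumes "B \<in> branches N S mu"
  obtains nu where "B = {x. reach nu x}" "nu \<noteq> mu" "nu \<in> vertices N"
  using assms unfolding branches_eq_components dual_adj_def by auto

lemma branch_containing_eq:
  assumes "eta \<in> vertices N" "eta \<noteq> mu"
  shows "branch_containing N S mu eta = {x. reach eta x}"
    and "{x. reach eta x} \<in> branches N S mu"
proof -
  obtain nu where nu: "dual_adj N S nu mu" "reach nu eta"
    using neighbour_of_mu_reaches[OF assms] by blast
  show mem: "{x. reach eta x} \<in> branches N S mu"
    unfolding branches_eq_components using nu(1) component_eq[OF nu(2)] by blast
  show "branch_containing N S mu eta = {x. reach eta x}"
    unfolding branch_containing_def
  proof (rule the_equality)
    fix B assume B: "B \<in> branches N S mu \<and> eta \<in> B"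
    then obtain nu' where "B = {x. reach nu' x}" using branchesE by blast
    with B show "B = {x. reach eta x}" using component_eq[of nu' eta] by simp
  qed (use mem in simp)
qed

lemma reaches_proximate_of_less:
  assumes "r \<in> vertices N" "r < mu"
  shows "\<exists>s\<in>S mu. reach r s"
proof -
  have mu: "1 \<le> r" "mu \<le> N" using assms mu_vertex unfolding vertices_def by auto
  then have "(adj S (Suc mu))\<^sup>*\<^sup>* r mu"
    using adj_connected[OF blowup_valid, of "Suc mu" r mu] assms(2) by simp
  then obtain z where z: "(adj_avoiding S (Suc mu) mu)\<^sup>*\<^sup>* r z" "adj S (Suc mu) z mu"
    using rtranclp_reaches_neighbour_avoiding[of "adj S (Suc mu)" r mu] assms(2) by blast
  from z(2) have "z \<in> S mu" by (simp add: adj.simps)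
  moreover have "reach r z" using reach_avoiding_lift[OF _ _ z(1), of "Suc N"] mu by simp
  ultimately show ?thesis by blast
qed

lemma anterior_iff_less:
  assumes "B \<in> branches N S mu"
  shows "anterior S mu B \<longleftrightarrow> (\<exists>r\<in>B. r < mu)"
proof -
  obtain nu where nu: "B = {x. reach nu x}" "nu \<noteq> mu" "nu \<in> vertices N"
    using branchesE[OF assms] .
  show ?thesis
  proof
    assume "anterior S mu B"
    then obtain r where "r \<in> B" "inf_near S mu r" unfolding anterior_def by blast
    moreover from this have "r \<noteq> mu" using nu reach_ne_mu by blast
    ultimately show "\<exists>r\<in>B. r < mu"
      using inf_near_le[OF _ blowup_valid mu_vertex] by force
  next
    assume "\<exists>r\<in>B. r < mu"
    then obtain r where r: "reach nu r" "r < mu" using nu by blast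
    then obtain s where s: "s \<in> S mu" "reach r s"
      using reaches_proximate_of_less reach_in_vertices nu(3) by blast
    have "inf_near S mu s" using inf_near.step[OF s(1) inf_near.refl[of S s]] .
    moreover have "s \<in> B" using nu(1) rtranclp_trans[OF r(1) s(2)] by simp
    ultimately show "anterior S mu B" unfolding anterior_def by blast
  qed
qed

lemma proximate_less: "eta \<in> vertices N \<Longrightarrow> proximate S eta nu \<Longrightarrow> nu < eta"
  using valid_seq_proximates[OF blowup_valid] unfolding proximate_def vertices_def by fastforce

lemma proximates_in_vertices: "{eta \<in> vertices N. proximate S mu eta} = S mu"
  using valid_seq_proximates[OF blowup_valid] mu_vertex
  unfolding proximate_def vertices_def by fastforce

lemma free_proximate_iff:
  assumes "eta \<in> vertices N"
  shows "free_vertex N S eta \<and> proximate S eta mu \<longleftrightarrow> S eta = {mu}"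
proof -
  have fin: "finite (S eta)" and "S eta \<subseteq> {1..<eta}"
    using valid_seq_proximates[OF blowup_valid] assms unfolding vertices_def by auto
  then have "S eta \<subseteq> vertices N" using assms unfolding vertices_def by auto
  then have "{nu \<in> vertices N. proximate S eta nu} = S eta" unfolding proximate_def by blast
  then show ?thesis
    unfolding free_vertex_def proximate_def using card_le_Suc0_iff_eq[OF fin] by auto
qed

text \<open>When \<open>\<eta>\<close> appears, its only neighbour is \<open>\<mu>\<close>; so in \<open>\<Gamma> - \<mu>\<close> it cannot reach an older vertex.\<close>
lemma proximate_only_to_mu_least:
  assumes "eta \<in> vertices N" "S eta = {mu}" "reach eta r"
  shows "eta \<le> r"
proof (rule ccontr)
  assume "\<not> eta \<le> r"
  then have "(adj_avoiding S (Suc eta) mu)\<^sup>*\<^sup>* eta r"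
    using reach_avoiding_project[OF blowup, of "Suc eta" "Suc N" eta r mu] assms(1,3)
    by (simp add: vertices_def)
  then show False
  proof (rule converse_rtranclpE)
    fix y assume "adj_avoiding S (Suc eta) mu eta y"
    with assms(2) show False by (auto simp: adj.simps)
  qed (use \<open>\<not> eta \<le> r\<close> in simp)
qed

lemma branch_containing_inj_on_proximate_only_to_mu:
  "inj_on (branch_containing N S mu) {eta \<in> vertices N. S eta = {mu}}"
proof (rule inj_onI)
  fix e1 e2 assume "e1 \<in> {eta \<in> vertices N. S eta = {mu}}" "e2 \<in> {eta \<in> vertices N. S eta = {mu}}"
    and eq: "branch_containing N S mu e1 = branch_containing N S mu e2"
  then have e1: "e1 \<in> vertices N" "S e1 = {mu}" and e2: "e2 \<in> vertices N" "S e2 = {mu}" by auto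
  then have "mu < e1" "mu < e2" using proximate_less unfolding proximate_def by auto
  then have "{x. reach e1 x} = {x. reach e2 x}"
    using eq branch_containing_eq(1)[OF e1(1)] branch_containing_eq(1)[OF e2(1)] by simp
  then have "reach e1 e2" by blast
  then have "e1 \<le> e2" and "e2 \<le> e1"
    by (rule proximate_only_to_mu_least[OF e1], rule proximate_only_to_mu_least[OF e2 reach_sym])
  then show "e1 = e2" by simp
qed

lemma posterior_branch_least_vertex:
  assumes B: "B \<in> branches N S mu" "B \<noteq> {}" "posterior S mu B"
  shows "Min B \<in> vertices N \<and> S (Min B) = {mu} \<and> B = {x. reach (Min B) x}"
proof -
  obtain nu where nu: "B = {x. reach nu x}" "nu \<noteq> mu" "nu \<in> vertices N"
    using branchesE[OF B(1)] .
  have BV: "B \<subseteq> vertices N" using reach_in_vertices nu by blast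
  then have "finite B" unfolding vertices_def using finite_subset by blast
  define e where "e = Min B"
  have "e \<in> B" using Min_in[OF \<open>finite B\<close> B(2)] e_def by simp
  then have eV: "e \<in> vertices N" and Be: "B = {x. reach e x}"
    using BV component_eq[of nu e] nu(1) by auto
  have "e \<noteq> mu" using \<open>e \<in> B\<close> nu reach_ne_mu by blast
  moreover have "\<not> e < mu"
    using \<open>e \<in> B\<close> anterior_iff_less[OF B(1)] B(3) unfolding posterior_def by blast
  ultimately have "mu < e" by simp
  then have "S e \<noteq> {}" using blowup_valid eV mu_vertex unfolding valid_seq_def vertices_def by auto
  moreover have "S e \<subseteq> {mu}"
  proof
    fix s assume s: "s \<in> S e"
    then have "s < e" using proximate_less[OF eV] unfolding proximate_def by blast
    show "s \<in> {mu}"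
    proof (rule ccontr)
      assume "s \<notin> {mu}"
      with s \<open>s < e\<close> \<open>mu < e\<close> have "(adj_avoiding S (Suc e) mu)\<^sup>*\<^sup>* e s"
        by (intro r_into_rtranclp) (simp add: adj.simps)
      then have "s \<in> B"
        using reach_avoiding_lift[of mu "Suc e" "Suc N"] \<open>mu < e\<close> eV Be by (simp add: vertices_def)
      then show False using Min_le[OF \<open>finite B\<close>] \<open>s < e\<close> e_def by fastforce
    qed
  qed
  ultimately have "S e = {mu}" by auto
  with eV Be show ?thesis unfolding e_def by (intro conjI)
qed

lemma image_branch_containing_proximate_only_to_mu:
  "branch_containing N S mu ` {eta \<in> vertices N. S eta = {mu}}
     = {B \<in> branches N S mu. B \<noteq> {} \<and> posterior S mu B}"
proof (intro set_eqI iffI)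
  fix B assume "B \<in> branch_containing N S mu ` {eta \<in> vertices N. S eta = {mu}}"
  then obtain e where e: "e \<in> vertices N" "S e = {mu}" and "B = branch_containing N S mu e"
    by blast
  moreover have "mu < e" using e proximate_less unfolding proximate_def by blast
  ultimately have B: "B = {x. reach e x}" "B \<in> branches N S mu"
    using branch_containing_eq by auto
  have "\<not> anterior S mu B"
    using anterior_iff_less[OF B(2)] proximate_only_to_mu_least[OF e] \<open>mu < e\<close> B(1) by fastforce
  with B show "B \<in> {B \<in> branches N S mu. B \<noteq> {} \<and> posterior S mu B}"
    unfolding posterior_def by auto
next
  fix B assume "B \<in> {B \<in> branches N S mu. B \<noteq> {} \<and> posterior S mu B}"
  then have e: "Min B \<in> vertices N" "S (Min B) = {mu}" and B: "B = {x. reach (Min B) x}"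
    using posterior_branch_least_vertex by auto
  then have "mu < Min B" using proximate_less unfolding proximate_def by auto
  then have "branch_containing N S mu (Min B) = B" using branch_containing_eq(1)[OF e(1)] B by simp
  with e show "B \<in> branch_containing N S mu ` {eta \<in> vertices N. S eta = {mu}}" by blast
qed

text \<open>Two vertices that \<open>\<mu>\<close> is proximate to lie in different components of \<open>\<Gamma> - \<mu>\<close>, since
otherwise the edge joining one of them to \<open>\<mu>\<close> on \<open>X\<^bsub>\<mu>+1\<^esub>\<close> would lie on a cycle.\<close>
lemma branch_containing_inj_on_proximates: "inj_on (branch_containing N S mu) (S mu)"
proof (rule inj_onI)
  fix s1 s2 assume s: "s1 \<in> S mu" "s2 \<in> S mu"
    and eq: "branch_containing N S mu s1 = branch_containing N S mu s2"
  have mu: "mu \<le> N" using mu_vertex unfolding vertices_def by simp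
  have "s1 \<in> vertices N" "s2 \<in> vertices N" using s proximates_in_vertices by auto
  moreover have less: "s1 < mu" "s2 < mu"
    using s proximate_less[OF mu_vertex] unfolding proximate_def by auto
  ultimately have "{x. reach s1 x} = {x. reach s2 x}" using eq branch_containing_eq(1) by simp
  then have "reach s1 s2" by blast
  then have path: "(adj_avoiding S (Suc mu) mu)\<^sup>*\<^sup>* s1 s2"
    using reach_avoiding_project[OF blowup, of "Suc mu" "Suc N" s1 s2 mu] mu less by simp
  show "s1 = s2"
  proof (rule ccontr)
    assume "s1 \<noteq> s2"
    have "(adj_minus_edge S (Suc mu) s1 mu)\<^sup>*\<^sup>* s1 s2"
      using path by (rule mono_rtranclp[rule_format, rotated]) (use adj_irrefl in blast)
    moreover have "adj_minus_edge S (Suc mu) s1 mu s2 mu"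
      using s(2) less(2) \<open>s1 \<noteq> s2\<close> by (simp add: adj.simps)
    ultimately have "(adj_minus_edge S (Suc mu) s1 mu)\<^sup>*\<^sup>* s1 mu"
      by (rule rtranclp.rtrancl_into_rtrancl)
    moreover have "adj S (Suc mu) s1 mu" using s(1) less(1) by (simp add: adj.simps)
    ultimately show False using adj_edge_bridge[OF blowup, of "Suc mu" s1 mu] mu by simp
  qed
qed

lemma image_branch_containing_proximates:
  "branch_containing N S mu ` S mu = {B \<in> branches N S mu. anterior S mu B}"
proof (intro set_eqI iffI)
  fix B assume "B \<in> branch_containing N S mu ` S mu"
  then obtain s where s: "s \<in> S mu" "B = branch_containing N S mu s" by blast
  have "s \<in> vertices N" "s < mu"
    using s(1) proximates_in_vertices proximate_less[OF mu_vertex] unfolding proximate_def by auto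
  then have B: "B = {x. reach s x}" "B \<in> branches N S mu"
    using branch_containing_eq s(2) by auto
  have "inf_near S mu s" using inf_near.step[OF s(1) inf_near.refl[of S s]] .
  with B show "B \<in> {B \<in> branches N S mu. anterior S mu B}" unfolding anterior_def by auto
next
  fix B assume "B \<in> {B \<in> branches N S mu. anterior S mu B}"
  then have B: "B \<in> branches N S mu" "anterior S mu B" by auto
  obtain nu where nu: "B = {x. reach nu x}" "nu \<in> vertices N"
    using branchesE[OF B(1)] by blast
  obtain r where r: "reach nu r" "r < mu" using anterior_iff_less[OF B(1)] B(2) nu(1) by blast
  obtain s where s: "s \<in> S mu" "reach r s"
    using reaches_proximate_of_less reach_in_vertices[OF r(1) nu(2)] r(2) by blast
  have "s \<in> vertices N" "s < mu"
    using s(1) proximates_in_vertices proximate_less[OF mu_vertex] unfolding proximate_def by auto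
  moreover have "B = {x. reach s x}" using nu(1) component_eq rtranclp_trans[OF r(1) s(2)] by simp
  ultimately have "branch_containing N S mu s = B" using branch_containing_eq(1) by simp
  with s(1) show "B \<in> branch_containing N S mu ` S mu" by blast
qed

end

theorem mainTheorem16:
  fixes N :: nat and S :: "nat \<Rightarrow> nat set" and mu :: nat
  assumes "blowup_seq N S"
    and "mu \<in> vertices N"
  shows "bij_betw (branch_containing N S mu)
           {eta \<in> vertices N. free_vertex N S eta \<and> proximate S eta mu}
           {B \<in> branches N S mu. B \<noteq> {} \<and> posterior S mu B}
       \<and> bij_betw (branch_containing N S mu)
           {eta \<in> vertices N. proximate S mu eta}
           {B \<in> branches N S mu. anterior S mu B}
       \<and> card {B \<in> branches N S mu. anterior S mu B} \<le> 2"
proof -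
  have "{eta \<in> vertices N. free_vertex N S eta \<and> proximate S eta mu}
      = {eta \<in> vertices N. S eta = {mu}}"
    using free_proximate_iff[OF assms] by blast
  then have posterior: "bij_betw (branch_containing N S mu)
      {eta \<in> vertices N. free_vertex N S eta \<and> proximate S eta mu}
      {B \<in> branches N S mu. B \<noteq> {} \<and> posterior S mu B}"
    unfolding bij_betw_def
    using branch_containing_inj_on_proximate_only_to_mu[OF assms]
      image_branch_containing_proximate_only_to_mu[OF assms] by simp
  have anterior: "bij_betw (branch_containing N S mu)
      {eta \<in> vertices N. proximate S mu eta} {B \<in> branches N S mu. anterior S mu B}"
    unfolding bij_betw_def proximates_in_vertices[OF assms]
    using branch_containing_inj_on_proximates[OF assms]
      image_branch_containing_proximates[OF assms] by simp
  have "card (S mu) \<le> 2"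
    using valid_seq_proximates[OF blowup_valid[OF assms]] assms(2) unfolding vertices_def by simp
  then have "card {B \<in> branches N S mu. anterior S mu B} \<le> 2"
    using bij_betw_same_card[OF anterior] proximates_in_vertices[OF assms] by simp
  with posterior anterior show ?thesis by simp
qed

end
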